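(* Let $A$ be a $C^*$-algebra and let $J \subset A$ be a closed right ideal. If $J$ is topologically essential, then $J$ is essential.
   Context: A closed right ideal $J$ of a $C^*$-algebra $A$ is called topologically essential if for every nonzero closed right ideal $K \subset A$ one has $J \cap K \neq \{0\}$. It is called essential if for every nonzero right ideal $I \subset A$ (not necessarily closed; a right ideal here means a linear subspace $I$ with $IA \subset I$) one has $J \cap I \neq \{0\}$. *)

theory Defs
  imports Complex_Main
begin

text \<open>Abstract (not necessarily unital) C*-algebras: a complex Banach algebra with an
  isometric-by-C*-identity involution.\<close>

class cstar_algebra = banach + real_normed_algebra +
  fixes scaleC :: "complex \<Rightarrow> 'a \<Rightarrow> 'a"
    and adj :: "'a \<Rightarrow> 'a"
  assumes scaleC_add_right: "scaleC c (x + y) = scaleC c x + scaleC c y"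
    and scaleC_add_left: "scaleC (c + d) x = scaleC c x + scaleC d x"
    and scaleC_scaleC: "scaleC c (scaleC d x) = scaleC (c * d) x"
    and scaleC_one: "scaleC 1 x = x"
    and scaleR_scaleC: "scaleR r x = scaleC (complex_of_real r) x"
    and norm_scaleC: "norm (scaleC c x) = cmod c * norm x"
    and mult_scaleC_left: "scaleC c x * y = scaleC c (x * y)"
    and mult_scaleC_right: "x * scaleC c y = scaleC c (x * y)"
    and adj_adj: "adj (adj x) = x"
    and adj_add: "adj (x + y) = adj x + adj y"
    and adj_scaleC: "adj (scaleC c x) = scaleC (cnj c) (adj x)"
    and adj_mult: "adj (x * y) = adj y * adj x"
    and cstar_identity: "norm (adj x * x) = norm x * norm x"

definition right_ideal :: "'a::cstar_algebra set \<Rightarrow> bool" where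
  "right_ideal I \<longleftrightarrow> 0 \<in> I \<and> (\<forall>x\<in>I. \<forall>y\<in>I. x + y \<in> I)
     \<and> (\<forall>c. \<forall>x\<in>I. scaleC c x \<in> I) \<and> (\<forall>x\<in>I. \<forall>a. x * a \<in> I)"

definition closed_right_ideal :: "'a::cstar_algebra set \<Rightarrow> bool" where
  "closed_right_ideal I \<longleftrightarrow> right_ideal I \<and> closed I"

definition topologically_essential :: "'a::cstar_algebra set \<Rightarrow> bool" where
  "topologically_essential J \<longleftrightarrow>
     (\<forall>K. closed_right_ideal K \<and> K \<noteq> {0} \<longrightarrow> J \<inter> K \<noteq> {0})"

definition essential :: "'a::cstar_algebra set \<Rightarrow> bool" where
  "essential J \<longleftrightarrow> (\<forall>I. right_ideal I \<and> I \<noteq> {0} \<longrightarrow> J \<inter> I \<noteq> {0})"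

end

theory Submission
  imports Defs "HOL-Analysis.Analysis" "HOL-Computational_Algebra.Fundamental_Theorem_Algebra"
begin

text \<open>Given a nonzero \<open>x\<close> in the right ideal \<open>I\<close>, the continuous functional calculus of the
  self-adjoint contraction \<open>b = x x\<^sup>* / \<parallel>x x\<^sup>*\<parallel>\<close> yields \<open>\<kappa>\<close> and \<open>\<zeta> \<noteq> 0\<close> with \<open>b \<kappa> \<zeta> = \<zeta>\<close>
  (take \<open>\<zeta> = g(b)\<close> and \<open>b \<kappa> = f(b)\<close> for continuous \<open>f, g\<close> with \<open>f = 1\<close> on the support of \<open>g\<close> and
  \<open>f = 0\<close> near \<open>0\<close>). Then \<open>K = {w. x c w = w}\<close> with \<open>c = x\<^sup>* \<kappa> / \<parallel>x x\<^sup>*\<parallel>\<close> is a nonzero closed right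
  ideal contained in \<open>x A \<subseteq> I\<close>, so \<open>J \<inter> I \<supseteq> J \<inter> K \<noteq> 0\<close>.

  The functional calculus is built from polynomials, and its one analytic input is the bound
  \<open>\<parallel>p(b)\<parallel> \<le> sup\<^bsub>[-1,1]\<^esub> \<bar>p\<bar>\<close>. It follows in the unitization: the spectrum of \<open>b\<close> lies in
  \<open>[-1, 1]\<close>, so by factoring \<open>1 - \<mu> p\<close> into linear factors \<open>1 - \<mu> p(b)\<close> is invertible for small
  \<open>\<mu>\<close>; Rickart's elementary argument (averaging resolvents over roots of unity) turns this into
  a bound on the spectral radius of \<open>p(b)\<close>, which equals its norm by the C*-identity since
  \<open>p(b)\<close> is self-adjoint.\<close>

lemma scaleC_zero_right [simp]: "scaleC c 0 = (0::'a::cstar_algebra)"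
  using scaleC_add_right[of c 0 "0::'a"] by simp

lemma scaleC_zero_left [simp]: "scaleC 0 x = (0::'a::cstar_algebra)"
  using scaleC_add_left[of 0 0 x] by simp

lemma adj_zero [simp]: "adj 0 = (0::'a::cstar_algebra)"
  using adj_add[of "0::'a" 0] by simp

lemma adj_scaleR: "adj (scaleR r x) = scaleR r (adj x)"
  by (simp add: scaleR_scaleC adj_scaleC)

lemma norm_adj [simp]: "norm (adj x) = norm x"
proof -
  have le: "norm y \<le> norm (adj y)" for y :: 'a
  proof (cases "y = 0")
    case False
    have "norm y * norm y \<le> norm (adj y) * norm y"
      using cstar_identity[of y] norm_mult_ineq[of "adj y" y] by simp
    then show ?thesis using False by simp
  qed simp
  show ?thesis using le[of x] le[of "adj x"] by (simp add: adj_adj)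
qed

lemma cstar_identity_right: "norm (x * adj x) = norm x * norm x"
  using cstar_identity[of "adj x"] by (simp add: adj_adj)

lemma norm_le_of_left_mult_bound:
  fixes x :: "'a::cstar_algebra"
  assumes "\<And>y. norm (x * y) \<le> K * norm y" and "0 \<le> K"
  shows "norm x \<le> K"
proof (cases "x = 0")
  case False
  have "norm x * norm x \<le> K * norm x"
    using assms(1)[of "adj x"] cstar_identity_right[of x] by simp
  then show ?thesis using False by simp
qed (use assms(2) in simp)

section \<open>Inverses in unital Banach algebras\<close>

definition is_inverse :: "'a::ring_1 \<Rightarrow> 'a \<Rightarrow> bool" where
  "is_inverse u v \<longleftrightarrow> u * v = 1 \<and> v * u = 1"

definition the_inverse :: "'a::ring_1 \<Rightarrow> 'a" where
  "the_inverse u = (THE v. is_inverse u v)"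

lemma is_inverse_unique: "is_inverse u v \<Longrightarrow> is_inverse u w \<Longrightarrow> v = w"
  unfolding is_inverse_def by (metis mult.assoc mult_1_left mult_1_right)

lemma the_inverse_eq: "is_inverse u v \<Longrightarrow> the_inverse u = v"
  unfolding the_inverse_def using is_inverse_unique by blast

lemma is_inverse_one [simp]: "is_inverse 1 1"
  by (simp add: is_inverse_def)

lemma is_inverse_mult: "is_inverse a a' \<Longrightarrow> is_inverse b b' \<Longrightarrow> is_inverse (a * b) (b' * a')"
  unfolding is_inverse_def by (metis mult.assoc mult_1_left)

lemma is_inverse_minus: "is_inverse u v \<Longrightarrow> is_inverse (- u) (- v)"
  by (simp add: is_inverse_def)

lemma geometric_sum_left: "(1 - x) * (\<Sum>i<n. x ^ i) = 1 - (x::'a::ring_1) ^ n"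
proof (induction n)
  case (Suc n)
  have "(1 - x) * (\<Sum>i<Suc n. x ^ i) = (1 - x) * (\<Sum>i<n. x ^ i) + (1 - x) * x ^ n"
    by (simp add: distrib_left)
  also have "\<dots> = 1 - x ^ n + (1 - x) * x ^ n" by (simp only: Suc.IH)
  also have "\<dots> = 1 - x * x ^ n" by (simp add: algebra_simps)
  finally show ?case by simp
qed simp

lemma geometric_sum_right: "(\<Sum>i<n. x ^ i) * (1 - x) = 1 - (x::'a::ring_1) ^ n"
proof (induction n)
  case (Suc n)
  have "(\<Sum>i<Suc n. x ^ i) * (1 - x) = (\<Sum>i<n. x ^ i) * (1 - x) + x ^ n * (1 - x)"
    by (simp add: distrib_right)
  also have "\<dots> = 1 - x ^ n + x ^ n * (1 - x)" by (simp only: Suc.IH)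
  also have "\<dots> = 1 - x ^ n * x" by (simp add: algebra_simps)
  finally show ?case by (simp add: power_commutes)
qed simp

lemma two_eq_resolvent_diff:
  fixes y :: "'a::ring_1"
  assumes "is_inverse (1 - y) P" "is_inverse (1 + y) P'"
  shows "y + y = (1 - y) * (P - P') * (1 + y)"
proof -
  have "(1 - y) * (P - P') * (1 + y) = ((1 - y) * P) * (1 + y) - (1 - y) * (P' * (1 + y))"
    by (simp add: algebra_simps)
  also have "\<dots> = (1 + y) - (1 - y)" using assms by (simp add: is_inverse_def)
  finally show ?thesis by simp
qed

context
  fixes u :: "'a::{real_normed_algebra_1,banach}"
begin

lemma is_inverse_neumann_series:
  assumes "summable (\<lambda>n. norm (u ^ n))"
  shows "is_inverse (1 - u) (\<Sum>n. u ^ n)"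
proof -
  have s: "summable (\<lambda>n. u ^ n)" using assms by (rule summable_norm_cancel)
  have shift: "u * (\<Sum>n. u ^ n) = (\<Sum>n. u ^ n) - 1" "(\<Sum>n. u ^ n) * u = (\<Sum>n. u ^ n) - 1"
    using suminf_mult[OF s, of u] suminf_mult2[OF s, of u] suminf_split_head[OF s]
    by (simp_all add: power_commutes)
  show ?thesis
    unfolding is_inverse_def by (simp add: left_diff_distrib right_diff_distrib shift)
qed

lemma neumann_series_small:
  assumes "norm u < 1"
  shows "is_inverse (1 - u) (\<Sum>n. u ^ n)" and "norm ((\<Sum>n. u ^ n) - 1) \<le> norm u / (1 - norm u)"
proof -
  have sn: "summable (\<lambda>n. norm u ^ n)" using assms by (simp add: summable_geometric)
  have sm: "summable (\<lambda>n. norm (u ^ n))"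
    by (rule summable_comparison_test[OF _ sn]) (simp add: norm_power_ineq)
  show "is_inverse (1 - u) (\<Sum>n. u ^ n)" by (rule is_inverse_neumann_series[OF sm])
  have s: "summable (\<lambda>n. u ^ n)" using sm by (rule summable_norm_cancel)
  have "norm (\<Sum>n. u ^ n) \<le> (\<Sum>n. norm (u ^ n))" by (rule summable_norm[OF sm])
  also have "\<dots> \<le> (\<Sum>n. norm u ^ n)"
    by (rule suminf_le[OF _ sm sn]) (simp add: norm_power_ineq)
  also have "\<dots> = 1 / (1 - norm u)" using assms by (simp add: suminf_geometric)
  finally have ns: "norm (\<Sum>n. u ^ n) \<le> 1 / (1 - norm u)" .
  have "(\<Sum>n. u ^ n) - 1 = u * (\<Sum>n. u ^ n)"
    using suminf_split_head[OF s] suminf_mult[OF s, of u] by simp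
  then have "norm ((\<Sum>n. u ^ n) - 1) \<le> norm u * norm (\<Sum>n. u ^ n)"
    by (simp add: norm_mult_ineq)
  also have "\<dots> \<le> norm u * (1 / (1 - norm u))"
    by (rule mult_left_mono[OF ns norm_ge_zero])
  finally show "norm ((\<Sum>n. u ^ n) - 1) \<le> norm u / (1 - norm u)" by simp
qed

end

lemma is_inverse_perturb:
  fixes u :: "'a::{real_normed_algebra_1,banach}"
  assumes inv: "is_inverse u v" and small: "norm v * norm w \<le> 1/2"
  shows "\<exists>v'. is_inverse (u - w) v' \<and> norm (v' - v) \<le> 2 * (norm v * norm v) * norm w"
proof -
  define q where "q = v * w"
  have nq: "norm q \<le> norm v * norm w" unfolding q_def by (rule norm_mult_ineq)
  then have nq1: "norm q \<le> 1/2" using small by linarith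
  define S where "S = (\<Sum>n. q ^ n)"
  have iS: "is_inverse (1 - q) S" and nS: "norm (S - 1) \<le> norm q / (1 - norm q)"
    using neumann_series_small[of q] nq1 by (simp_all add: S_def)
  have "u - w = u * (1 - q)"
    using inv by (simp add: q_def is_inverse_def algebra_simps mult.assoc[symmetric])
  then have iSv: "is_inverse (u - w) (S * v)"
    using is_inverse_mult[OF inv iS] by simp
  have "norm (S - 1) \<le> norm q / (1/2)"
    using nS nq1 order_trans divide_left_mono[of "1/2" "1 - norm q" "norm q"] by auto
  then have "norm (S - 1) \<le> 2 * (norm v * norm w)" using nq by simp
  then have "norm ((S - 1) * v) \<le> 2 * (norm v * norm w) * norm v"
    using norm_mult_ineq[of "S - 1" v] mult_right_mono[of _ _ "norm v"] by (meson norm_ge_zero order_trans)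
  moreover have "(S - 1) * v = S * v - v" by (simp add: algebra_simps)
  ultimately show ?thesis using iSv by (intro exI[of _ "S * v"]) (simp add: ac_simps)
qed

lemma continuous_on_the_inverse:
  assumes "\<forall>u\<in>S. \<exists>v. is_inverse (u::'a::{real_normed_algebra_1,banach}) v"
  shows "continuous_on S the_inverse"
  unfolding continuous_on_iff
proof (intro ballI allI impI)
  fix u0 and e :: real assume u0: "u0 \<in> S" and e: "e > 0"
  obtain v0 where v0: "is_inverse u0 v0" using assms u0 by blast
  define K where "K = norm v0 + 1"
  have K: "K > 0" "norm v0 \<le> K" by (simp_all add: K_def add_nonneg_pos)
  define d where "d = min (1 / (2 * K)) (e / (2 * (K * K)))"
  have d: "d > 0" using K e by (simp add: d_def)
  show "\<exists>d>0. \<forall>u\<in>S. dist u u0 < d \<longrightarrow> dist (the_inverse u) (the_inverse u0) < e"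
  proof (intro exI conjI ballI impI, fact d)
    fix u assume "u \<in> S" and "dist u u0 < d"
    define w where "w = u0 - u"
    have w: "norm w < d" using \<open>dist u u0 < d\<close> by (simp add: w_def dist_norm norm_minus_commute)
    have "norm v0 * norm w \<le> K * d" using K w by (intro mult_mono) auto
    also have "K * d \<le> 1/2" using K by (simp add: d_def min_def field_simps)
    finally obtain v where v: "is_inverse (u0 - w) v"
      and bd: "norm (v - v0) \<le> 2 * (norm v0 * norm v0) * norm w"
      using is_inverse_perturb[OF v0] by blast
    have "u0 - w = u" by (simp add: w_def)
    have "2 * (norm v0 * norm v0) * norm w \<le> 2 * (K * K) * norm w"
      using K by (intro mult_right_mono mult_mono) auto
    also have "\<dots> < 2 * (K * K) * d" using K w by simp
    also have "\<dots> \<le> e" using K by (simp add: d_def min_def field_simps)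
    finally show "dist (the_inverse u) (the_inverse u0) < e"
      using bd v \<open>u0 - w = u\<close> the_inverse_eq[OF v0] by (simp add: the_inverse_eq dist_norm)
  qed
qed

section \<open>The unitization\<close>

datatype 'a unitization = Unitization (scalar_part: complex) (vector_part: 'a)

lemma unitization_eq_iff: "u = v \<longleftrightarrow> scalar_part u = scalar_part v \<and> vector_part u = vector_part v"
  by (cases u; cases v) auto

instantiation unitization :: (cstar_algebra) ring_1
begin
definition "0 = Unitization 0 0"
definition "1 = Unitization 1 0"
definition "u + v = Unitization (scalar_part u + scalar_part v) (vector_part u + vector_part v)"
definition "- u = Unitization (- scalar_part u) (- vector_part u)"
definition "u - v = Unitization (scalar_part u - scalar_part v) (vector_part u - vector_part v)"
definition "u * v = Unitization (scalar_part u * scalar_part v)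
  (scaleC (scalar_part u) (vector_part v) + scaleC (scalar_part v) (vector_part u)
    + vector_part u * vector_part v)"
instance
proof
  fix a b c :: "'a unitization"
  show "a * b * c = a * (b * c)"
    by (simp add: times_unitization_def unitization_eq_iff scaleC_add_right scaleC_scaleC
        mult_scaleC_left mult_scaleC_right distrib_left distrib_right mult.assoc ac_simps)
  show "(a + b) * c = a * c + b * c" "a * (b + c) = a * b + a * c"
    by (simp_all add: times_unitization_def plus_unitization_def unitization_eq_iff
        scaleC_add_right scaleC_add_left distrib_left distrib_right ac_simps)
  show "1 * a = a" "a * 1 = a"
    by (simp_all add: times_unitization_def one_unitization_def unitization_eq_iff scaleC_one)
qed (simp_all add: plus_unitization_def zero_unitization_def one_unitization_def
    uminus_unitization_def minus_unitization_def unitization_eq_iff ac_simps)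
end

lemma scalar_part_zero [simp]: "scalar_part 0 = 0" and vector_part_zero [simp]: "vector_part 0 = 0"
  and scalar_part_one [simp]: "scalar_part 1 = 1" and vector_part_one [simp]: "vector_part 1 = 0"
  by (simp_all add: zero_unitization_def one_unitization_def)

lemma scalar_part_add [simp]: "scalar_part (u + v) = scalar_part u + scalar_part v"
  and vector_part_add [simp]: "vector_part (u + v) = vector_part u + vector_part v"
  and scalar_part_diff [simp]: "scalar_part (u - v) = scalar_part u - scalar_part v"
  and vector_part_diff [simp]: "vector_part (u - v) = vector_part u - vector_part v"
  and scalar_part_minus [simp]: "scalar_part (- u) = - scalar_part u"
  and vector_part_minus [simp]: "vector_part (- u) = - vector_part u"
  and scalar_part_mult [simp]: "scalar_part (u * v) = scalar_part u * scalar_part v"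
  and vector_part_mult [simp]: "vector_part (u * v) = scaleC (scalar_part u) (vector_part v)
    + scaleC (scalar_part v) (vector_part u) + vector_part u * vector_part v"
  by (simp_all add: plus_unitization_def minus_unitization_def uminus_unitization_def
      times_unitization_def)

instantiation unitization :: (cstar_algebra) real_vector
begin
definition "scaleR r u = Unitization (of_real r * scalar_part u) (scaleR r (vector_part u))"
instance
  by standard (simp_all add: scaleR_unitization_def unitization_eq_iff distrib_left distrib_right
      scaleR_add_right scaleR_add_left)
end

lemma scalar_part_scaleR [simp]: "scalar_part (scaleR r u) = of_real r * scalar_part u"
  and vector_part_scaleR [simp]: "vector_part (scaleR r u) = scaleR r (vector_part u)"
  by (simp_all add: scaleR_unitization_def)

instance unitization :: (cstar_algebra) real_algebra_1
  by standard (simp_all add: unitization_eq_iff scaleR_scaleC scaleC_scaleC scaleC_add_right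
      mult_scaleC_left mult_scaleC_right ac_simps)

text \<open>The norm \<open>\<bar>\<lambda>\<bar> + \<parallel>a\<parallel>\<close> is not a C*-norm, but the spectral theory below only needs a
  unital Banach algebra.\<close>

instantiation unitization :: (cstar_algebra) real_normed_vector
begin
definition norm_unitization where "norm u = cmod (scalar_part u) + norm (vector_part u)"
definition dist_unitization where "dist u v = norm (u - v)" for u v :: "'a unitization"
definition sgn_unitization where "sgn u = scaleR (inverse (norm u)) u" for u :: "'a unitization"
definition uniformity_unitization where
  "uniformity = (INF e\<in>{0<..}. principal {(x, y::'a unitization). dist x y < e})"
definition open_unitization where
  "open U \<longleftrightarrow> (\<forall>x\<in>U. \<forall>\<^sub>F (x', y) in uniformity. x' = x \<longrightarrow> y \<in> (U::'a unitization set))"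
instance
proof
  fix u v :: "'a unitization" and r :: real
  show "norm u = 0 \<longleftrightarrow> u = 0"
    by (auto simp: norm_unitization_def unitization_eq_iff add_nonneg_eq_0_iff)
  show "norm (u + v) \<le> norm u + norm v"
    using norm_triangle_ineq[of "scalar_part u" "scalar_part v"]
      norm_triangle_ineq[of "vector_part u" "vector_part v"]
    by (simp add: norm_unitization_def)
  show "norm (scaleR r u) = \<bar>r\<bar> * norm u"
    by (simp add: norm_unitization_def norm_mult distrib_left)
qed (simp_all add: dist_unitization_def sgn_unitization_def uniformity_unitization_def
    open_unitization_def)
end

instance unitization :: (cstar_algebra) real_normed_algebra_1
proof
  fix u v :: "'a unitization"
  show "norm (1::'a unitization) = 1" by (simp add: norm_unitization_def)
  have t: "norm (a + b + c) \<le> norm a + norm b + norm c" for a b c :: 'a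
    using norm_triangle_ineq[of "a + b" c] norm_triangle_ineq[of a b] by linarith
  have "norm (vector_part (u * v)) \<le> cmod (scalar_part u) * norm (vector_part v)
      + cmod (scalar_part v) * norm (vector_part u) + norm (vector_part u) * norm (vector_part v)"
    using t[of "scaleC (scalar_part u) (vector_part v)" "scaleC (scalar_part v) (vector_part u)"
        "vector_part u * vector_part v"] norm_mult_ineq[of "vector_part u" "vector_part v"]
    by (simp add: norm_scaleC)
  then show "norm (u * v) \<le> norm u * norm v"
    by (simp add: norm_unitization_def norm_mult algebra_simps)
qed

lemma tendsto_Unitization:
  assumes "(f \<longlongrightarrow> a) F" "(g \<longlongrightarrow> b) F"
  shows "((\<lambda>n. Unitization (f n) (g n)) \<longlongrightarrow> Unitization a (b::'a::cstar_algebra)) F"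
proof -
  have "((\<lambda>n. cmod (f n - a) + norm (g n - b)) \<longlongrightarrow> 0 + 0) F"
    using assms by (intro tendsto_add) (simp_all add: tendsto_norm_zero_iff LIM_zero_iff)
  then have "((\<lambda>n. norm (Unitization (f n) (g n) - Unitization a b)) \<longlongrightarrow> 0) F"
    by (simp add: norm_unitization_def)
  then show ?thesis by (simp add: tendsto_norm_zero_iff LIM_zero_iff)
qed

instance unitization :: (cstar_algebra) banach
proof
  fix X :: "nat \<Rightarrow> 'a unitization" assume "Cauchy X"
  have "cmod (scalar_part u) \<le> norm u" "norm (vector_part u) \<le> norm u" for u :: "'a unitization"
    by (simp_all add: norm_unitization_def)
  then have "Cauchy (\<lambda>n. scalar_part (X n))" "Cauchy (\<lambda>n. vector_part (X n))"
    using \<open>Cauchy X\<close> unfolding Cauchy_def dist_norm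
    by (metis le_less_trans scalar_part_diff vector_part_diff)+
  then obtain a b where "(\<lambda>n. scalar_part (X n)) \<longlonglongrightarrow> a" "(\<lambda>n. vector_part (X n)) \<longlonglongrightarrow> b"
    unfolding Cauchy_convergent_iff convergent_def by blast
  then have "(\<lambda>n. Unitization (scalar_part (X n)) (vector_part (X n))) \<longlonglongrightarrow> Unitization a b"
    by (rule tendsto_Unitization)
  then show "convergent X" by (auto simp: convergent_def)
qed

definition of_scalar :: "complex \<Rightarrow> 'a::cstar_algebra unitization" where
  "of_scalar c = Unitization c 0"

definition of_vector :: "'a::cstar_algebra \<Rightarrow> 'a unitization" where
  "of_vector a = Unitization 0 a"

lemma scalar_part_of_scalar [simp]: "scalar_part (of_scalar c) = c"
  and vector_part_of_scalar [simp]: "vector_part (of_scalar c) = 0"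
  and scalar_part_of_vector [simp]: "scalar_part (of_vector a) = 0"
  and vector_part_of_vector [simp]: "vector_part (of_vector a) = a"
  by (simp_all add: of_scalar_def of_vector_def)

lemma of_scalar_mult: "of_scalar (c * d) = (of_scalar c * of_scalar d :: 'a::cstar_algebra unitization)"
  and of_scalar_add: "of_scalar (c + d) = (of_scalar c + of_scalar d :: 'a::cstar_algebra unitization)"
  and of_scalar_minus: "of_scalar (- c) = (- of_scalar c :: 'a::cstar_algebra unitization)"
  and of_scalar_one [simp]: "of_scalar 1 = (1 :: 'a::cstar_algebra unitization)"
  and of_scalar_zero [simp]: "of_scalar 0 = (0 :: 'a::cstar_algebra unitization)"
  by (simp_all add: unitization_eq_iff)

lemma continuous_on_of_scalar:
  "continuous_on S f \<Longrightarrow> continuous_on S (\<lambda>x. of_scalar (f x) :: 'a::cstar_algebra unitization)"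
  unfolding continuous_on_def of_scalar_def by (auto intro: tendsto_Unitization)

lemma of_scalar_commute: "of_scalar c * u = u * (of_scalar c :: 'a::cstar_algebra unitization)"
  by (simp add: unitization_eq_iff mult.commute)

lemma norm_of_scalar_mult: "norm (of_scalar c * u) = cmod c * norm (u :: 'a::cstar_algebra unitization)"
  by (simp add: norm_unitization_def norm_mult norm_scaleC distrib_left)

lemma of_scalar_sum: "of_scalar (sum f S) = (\<Sum>i\<in>S. of_scalar (f i) :: 'a::cstar_algebra unitization)"
  by (induction S rule: infinite_finite_induct) (simp_all add: of_scalar_add)

lemma power_of_scalar_mult:
  "(of_scalar c * u) ^ n = of_scalar (c ^ n) * (u ^ n :: 'a::cstar_algebra unitization)"
proof (induction n)
  case (Suc n)
  have "(of_scalar c * u) ^ Suc n = of_scalar c * of_scalar (c ^ n) * (u * u ^ n)"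
    by (simp add: Suc mult.assoc) (metis of_scalar_commute mult.assoc)
  then show ?case by (simp add: of_scalar_mult)
qed simp

lemma is_inverse_of_scalar:
  "c \<noteq> 0 \<Longrightarrow> is_inverse (of_scalar c :: 'a::cstar_algebra unitization) (of_scalar (1 / c))"
  by (simp add: is_inverse_def of_scalar_mult[symmetric])

lemma of_vector_mult: "of_vector (a * b) = of_vector a * of_vector (b::'a::cstar_algebra)"
  and of_vector_diff: "of_vector (a - b) = of_vector a - of_vector (b::'a::cstar_algebra)"
  and norm_of_vector [simp]: "norm (of_vector a) = norm a"
  and of_vector_eq_iff: "of_vector a = of_vector b \<longleftrightarrow> a = b"
  by (simp_all add: unitization_eq_iff norm_unitization_def)

section \<open>Rickart's spectral radius estimate\<close>

definition unit_root :: "nat \<Rightarrow> complex" where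
  "unit_root n = exp (2 * of_real pi * \<i> / of_nat n)"

lemma unit_root_power: "unit_root n ^ m = exp (2 * of_real pi * \<i> * of_nat m / of_nat n)"
  unfolding unit_root_def exp_of_nat_mult[symmetric] by (simp add: field_simps)

lemma norm_unit_root [simp]: "cmod (unit_root n) = 1"
proof -
  have "unit_root n = exp (\<i> * of_real (2 * pi / real n))" unfolding unit_root_def by (simp add: field_simps)
  then show ?thesis by simp
qed

lemma unit_root_power_power_n:
  assumes "n \<ge> 1" shows "(unit_root n ^ m) ^ n = 1"
proof -
  have "unit_root n ^ n = 1" using complex_root_unity[of n 1] assms unfolding unit_root_power by simp
  then show ?thesis by (metis mult.commute power_mult power_one)
qed

lemma sum_unit_root_powers:
  assumes "n \<ge> 1" "m < n"
  shows "(\<Sum>k<n. (unit_root n ^ m) ^ k) = (if m = 0 then of_nat n else 0)"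
proof (cases "m = 0")
  case False
  have "unit_root n ^ m \<noteq> 1"
    using complex_root_unity_eq[of n m 0] False assms unfolding unit_root_power by simp
  then show ?thesis using False geometric_sum[of "unit_root n ^ m" n]
    by (simp add: unit_root_power_power_n[OF assms(1)])
qed simp

lemma sum_unit_root_geometric_sums:
  fixes Y :: "'a::cstar_algebra unitization"
  assumes n: "n \<ge> 1"
  shows "(\<Sum>k<n. \<Sum>m<n. (of_scalar (unit_root n ^ k) * Y) ^ m) = of_scalar (of_nat n)"
proof -
  have "(\<Sum>k<n. \<Sum>m<n. (of_scalar (unit_root n ^ k) * Y) ^ m)
      = (\<Sum>m<n. \<Sum>k<n. of_scalar ((unit_root n ^ m) ^ k) * Y ^ m)"
    unfolding power_of_scalar_mult
    by (subst sum.swap) (intro sum.cong refl, simp add: power_mult[symmetric] mult.commute)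
  also have "\<dots> = (\<Sum>m<n. of_scalar (\<Sum>k<n. (unit_root n ^ m) ^ k) * Y ^ m)"
    by (simp add: of_scalar_sum sum_distrib_right)
  also have "\<dots> = (\<Sum>m<n. if m = 0 then of_scalar (of_nat n) else 0)"
    using n by (intro sum.cong refl) (simp add: sum_unit_root_powers)
  finally show ?thesis using n by (simp add: sum.delta)
qed

text \<open>Averaging the inverses of \<open>1 - \<omega>\<^sup>k Y\<close> over the \<open>n\<close>-th roots of unity \<open>\<omega>\<^sup>k\<close>
  inverts \<open>1 - Y\<^sup>n\<close>, since \<open>\<Sum>\<^sub>k (\<omega>\<^sup>k Y)\<^sup>m\<close> vanishes for \<open>0 < m < n\<close>.\<close>

lemma is_inverse_one_minus_power:
  fixes Y :: "'a::cstar_algebra unitization"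
  assumes n: "n \<ge> 1"
    and G: "\<And>k. k < n \<Longrightarrow> is_inverse (1 - of_scalar (unit_root n ^ k) * Y) (G k)"
  shows "is_inverse (1 - Y ^ n) (of_scalar (1 / of_nat n) * (\<Sum>k<n. G k))"
proof -
  define Z where "Z k = of_scalar (unit_root n ^ k) * Y" for k
  define H where "H k = (\<Sum>m<n. Z k ^ m)" for k
  have Zn: "Z k ^ n = Y ^ n" for k
    using unit_root_power_power_n[OF n] by (simp add: Z_def power_of_scalar_mult)
  have GH: "G k * (1 - Y ^ n) = H k" "(1 - Y ^ n) * G k = H k" if "k < n" for k
  proof -
    have "G k * (1 - Y ^ n) = (G k * (1 - Z k)) * H k"
      by (simp only: H_def geometric_sum_left Zn mult.assoc)
    then show "G k * (1 - Y ^ n) = H k" using G[OF that] by (simp add: is_inverse_def Z_def)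
    have "(1 - Y ^ n) * G k = H k * ((1 - Z k) * G k)"
      by (simp only: H_def geometric_sum_right Zn flip: mult.assoc)
    then show "(1 - Y ^ n) * G k = H k" using G[OF that] by (simp add: is_inverse_def Z_def)
  qed
  have sumH: "(\<Sum>k<n. H k) = of_scalar (of_nat n)"
    unfolding H_def Z_def by (rule sum_unit_root_geometric_sums[OF n])
  have n1: "of_scalar (1 / of_nat n) * of_scalar (of_nat n) = (1 :: 'a unitization)"
    using n by (simp add: of_scalar_mult[symmetric])
  have "(1 - Y ^ n) * (of_scalar (1 / of_nat n) * (\<Sum>k<n. G k))
      = of_scalar (1 / of_nat n) * (\<Sum>k<n. (1 - Y ^ n) * G k)"
    by (metis of_scalar_commute mult.assoc sum_distrib_left)
  moreover have "(of_scalar (1 / of_nat n) * (\<Sum>k<n. G k)) * (1 - Y ^ n)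
      = of_scalar (1 / of_nat n) * (\<Sum>k<n. G k * (1 - Y ^ n))"
    by (simp add: sum_distrib_right mult.assoc)
  ultimately show ?thesis using GH sumH n1 by (simp add: is_inverse_def)
qed

lemma norm_average_diff_less:
  fixes G G' :: "nat \<Rightarrow> 'a::cstar_algebra unitization"
  assumes "n \<ge> 1" and "\<And>k. norm (G k - G' k) < e"
  shows "norm (of_scalar (1 / of_nat n) * (\<Sum>k<n. G k) - of_scalar (1 / of_nat n) * (\<Sum>k<n. G' k)) < e"
proof -
  have "norm (of_scalar (1 / of_nat n) * (\<Sum>k<n. G k) - of_scalar (1 / of_nat n) * (\<Sum>k<n. G' k))
      = (1 / real n) * norm (\<Sum>k<n. G k - G' k)"
    by (simp add: norm_of_scalar_mult norm_divide sum_subtractf flip: right_diff_distrib)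
  also have "\<dots> \<le> (1 / real n) * (\<Sum>k<n. norm (G k - G' k))"
    by (intro mult_left_mono norm_sum) simp
  also have "\<dots> < (1 / real n) * (\<Sum>k<n. e)"
    using assms by (intro mult_strict_left_mono sum_strict_mono) (auto simp: lessThan_empty_iff)
  finally show ?thesis using assms(1) by simp
qed

lemma norm_ne_one_of_close_resolvents:
  fixes y :: "'a::real_normed_algebra_1"
  assumes "is_inverse (1 - y) P" "is_inverse (1 + y) P'" and "norm (P - P') < 1/2"
  shows "norm y \<noteq> 1"
proof
  assume ny: "norm y = 1"
  have "2 * norm y = norm (y + y)" by (simp flip: scaleR_2)
  also have "\<dots> = norm ((1 - y) * (P - P') * (1 + y))"
    by (simp add: two_eq_resolvent_diff[OF assms(1,2)])
  also have "\<dots> \<le> norm (1 - y) * norm (P - P') * norm (1 + y)"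
    by (intro order_trans[OF norm_mult_ineq] mult_right_mono norm_mult_ineq norm_ge_zero)
  also have "\<dots> \<le> 2 * norm (P - P') * 2"
    using norm_triangle_ineq4[of 1 y] norm_triangle_ineq[of 1 y] ny
    by (intro mult_mono) auto
  finally show False using assms(3) ny by simp
qed

text \<open>Rotating \<open>\<mu>\<close> by \<open>\<pi>/n\<close> turns \<open>y = (\<mu>X)\<^sup>n\<close> into \<open>-y\<close>. Averaging the resolvent \<open>F\<close> over
  the \<open>n\<close>-th roots of unity, and over their rotations, gives inverses of \<open>1 - y\<close> and \<open>1 + y\<close>
  that are close by the uniform continuity of \<open>F\<close>.\<close>

lemma rickart_step:
  fixes X :: "'a::cstar_algebra unitization"
  assumes F: "\<And>\<mu>. cmod \<mu> \<le> R \<Longrightarrow> is_inverse (1 - of_scalar \<mu> * X) (F \<mu>)"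
    and uc: "\<And>\<mu>1 \<mu>2. cmod \<mu>1 \<le> R \<Longrightarrow> cmod \<mu>2 \<le> R \<Longrightarrow> cmod (\<mu>1 - \<mu>2) < \<delta>
      \<Longrightarrow> norm (F \<mu>1 - F \<mu>2) < 1/2"
    and n: "n \<ge> 1" and small: "cmod (exp (\<i> * of_real pi / of_nat n) - 1) * R < \<delta>"
    and \<mu>: "cmod \<mu> \<le> R"
  shows "norm ((of_scalar \<mu> * X) ^ n) \<noteq> 1"
proof -
  define \<zeta> where "\<zeta> = exp (\<i> * of_real pi / of_nat n)"
  have n\<zeta>: "cmod \<zeta> = 1"
    using norm_exp_i_times[of "pi / real n"] by (simp add: \<zeta>_def mult.commute)
  have \<zeta>n: "\<zeta> ^ n = -1"
    using n by (simp add: \<zeta>_def exp_of_nat_mult[symmetric] exp_Euler)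
  define G where "G k = F (unit_root n ^ k * \<mu>)" for k
  define G' where "G' k = F (unit_root n ^ k * (\<zeta> * \<mu>))" for k
  have in_disc: "cmod (unit_root n ^ k * \<mu>) \<le> R" "cmod (unit_root n ^ k * (\<zeta> * \<mu>)) \<le> R" for k
    using \<mu> n\<zeta> by (simp_all add: norm_mult norm_power)
  define Y where "Y = of_scalar \<mu> * X"
  have "is_inverse (1 - Y ^ n) (of_scalar (1 / of_nat n) * (\<Sum>k<n. G k))"
    using F[OF in_disc(1)] by (intro is_inverse_one_minus_power[OF n])
      (simp add: G_def Y_def of_scalar_mult mult.assoc)
  moreover have "is_inverse (1 - (of_scalar \<zeta> * Y) ^ n) (of_scalar (1 / of_nat n) * (\<Sum>k<n. G' k))"
    using F[OF in_disc(2)] by (intro is_inverse_one_minus_power[OF n])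
      (simp add: G'_def Y_def of_scalar_mult mult.assoc)
  then have "is_inverse (1 + Y ^ n) (of_scalar (1 / of_nat n) * (\<Sum>k<n. G' k))"
    by (simp add: power_of_scalar_mult \<zeta>n of_scalar_minus)
  moreover have "norm (G k - G' k) < 1/2" for k
  proof -
    have "unit_root n ^ k * \<mu> - unit_root n ^ k * (\<zeta> * \<mu>) = - (unit_root n ^ k * \<mu> * (\<zeta> - 1))"
      by (simp add: algebra_simps)
    then have "cmod (unit_root n ^ k * \<mu> - unit_root n ^ k * (\<zeta> * \<mu>)) = cmod \<mu> * cmod (\<zeta> - 1)"
      by (simp only: norm_minus_cancel norm_mult norm_power norm_unit_root) simp
    also have "\<dots> < \<delta>" using \<mu> small mult_right_mono[OF \<mu>, of "cmod (\<zeta> - 1)"]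
      by (simp add: \<zeta>_def mult.commute)
    finally show ?thesis unfolding G_def G'_def by (rule uc[OF in_disc])
  qed
  then have "norm (of_scalar (1 / of_nat n) * (\<Sum>k<n. G k) - of_scalar (1 / of_nat n) * (\<Sum>k<n. G' k))
      < 1/2"
    by (rule norm_average_diff_less[OF n])
  ultimately show ?thesis unfolding Y_def by (rule norm_ne_one_of_close_resolvents)
qed

lemma eventually_exp_pi_div_close:
  assumes "\<epsilon> > 0"
  shows "\<forall>\<^sub>F n in sequentially. cmod (exp (\<i> * of_real pi / of_nat n) - 1) < \<epsilon>"
proof -
  have "(\<lambda>n. exp ((\<i> * of_real pi) * (1 / of_nat n)) - 1) \<longlonglongrightarrow> exp ((\<i> * of_real pi) * 0) - (1::complex)"
    by (intro tendsto_intros)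
  then have "(\<lambda>n. cmod (exp (\<i> * of_real pi / of_nat n) - 1)) \<longlonglongrightarrow> 0"
    by (simp add: tendsto_norm_zero_iff)
  then show ?thesis using assms by (rule order_tendstoD(2))
qed

lemma uniformly_continuous_on_resolvent:
  fixes X :: "'a::cstar_algebra unitization"
  assumes "\<And>\<mu>. \<mu> \<in> cball 0 R \<Longrightarrow> \<exists>v. is_inverse (1 - of_scalar \<mu> * X) v"
  shows "uniformly_continuous_on (cball 0 R) (\<lambda>\<mu>. the_inverse (1 - of_scalar \<mu> * X))"
proof -
  have "continuous_on (cball 0 R) (\<lambda>\<mu>. 1 - of_scalar \<mu> * X)"
    by (intro continuous_intros continuous_on_of_scalar)
  then have "continuous_on (cball 0 R) (\<lambda>\<mu>. the_inverse (1 - of_scalar \<mu> * X))"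
    using assms
    by (intro continuous_on_compose2[OF continuous_on_the_inverse[of "(\<lambda>\<mu>. 1 - of_scalar \<mu> * X) ` cball 0 R"]])
      auto
  then show ?thesis by (rule compact_uniformly_continuous) simp
qed

text \<open>Rickart's bound on the spectral radius of \<open>X\<close>: if \<open>R\<^sup>n \<parallel>X\<^sup>n\<parallel> \<ge> 1\<close> for some large \<open>n\<close>,
  a \<open>\<mu> \<in> (0, R]\<close> gives \<open>\<parallel>(\<mu>X)\<^sup>n\<parallel> = 1\<close>, contradicting \<open>rickart_step\<close>.\<close>

theorem rickart_power_bound:
  fixes X :: "'a::cstar_algebra unitization"
  assumes R: "R > 0" and inv: "\<And>\<mu>. cmod \<mu> \<le> R \<Longrightarrow> \<exists>v. is_inverse (1 - of_scalar \<mu> * X) v"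
  shows "\<exists>N. \<forall>n\<ge>N. R ^ n * norm (X ^ n) < 1"
proof -
  define F where "F \<mu> = the_inverse (1 - of_scalar \<mu> * X)" for \<mu>
  have Fi: "is_inverse (1 - of_scalar \<mu> * X) (F \<mu>)" if "cmod \<mu> \<le> R" for \<mu>
    using inv[OF that] the_inverse_eq unfolding F_def by blast
  have "uniformly_continuous_on (cball 0 R) F"
    unfolding F_def using inv by (intro uniformly_continuous_on_resolvent) simp
  then obtain \<delta> where \<delta>: "\<delta> > 0"
    and uc: "\<And>\<mu>1 \<mu>2. \<mu>1 \<in> cball 0 R \<Longrightarrow> \<mu>2 \<in> cball 0 R \<Longrightarrow> dist \<mu>2 \<mu>1 < \<delta> \<Longrightarrow> dist (F \<mu>2) (F \<mu>1) < 1/2"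
    unfolding uniformly_continuous_on_def by (metis half_gt_zero zero_less_one)
  have uc': "norm (F \<mu>1 - F \<mu>2) < 1/2"
    if "cmod \<mu>1 \<le> R" "cmod \<mu>2 \<le> R" "cmod (\<mu>1 - \<mu>2) < \<delta>" for \<mu>1 \<mu>2
    using uc[of \<mu>2 \<mu>1] that by (simp add: dist_norm)
  obtain N0 where "\<And>n. n \<ge> N0 \<Longrightarrow> cmod (exp (\<i> * of_real pi / of_nat n) - 1) < \<delta> / R"
    using eventually_exp_pi_div_close[of "\<delta> / R"] \<delta> R unfolding eventually_sequentially by auto
  then have N0: "\<And>n. n \<ge> N0 \<Longrightarrow> cmod (exp (\<i> * of_real pi / of_nat n) - 1) * R < \<delta>"
    using R by (simp add: pos_less_divide_eq)
  have "R ^ n * norm (X ^ n) < 1" if n: "n \<ge> max N0 1" for n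
  proof (rule ccontr)
    assume "\<not> R ^ n * norm (X ^ n) < 1"
    define a where "a = R ^ n * norm (X ^ n)"
    then have a: "a \<ge> 1" using \<open>\<not> R ^ n * norm (X ^ n) < 1\<close> by simp
    define \<tau> where "\<tau> = root n (1 / a)"
    have \<tau>: "0 < \<tau>" "\<tau> \<le> 1" "\<tau> ^ n * a = 1"
      using n a by (simp_all add: \<tau>_def real_root_gt_zero)
    define \<mu> where "\<mu> = complex_of_real (\<tau> * R)"
    have cm: "cmod \<mu> = \<tau> * R" using \<tau> R unfolding \<mu>_def norm_of_real by simp
    have "cmod \<mu> \<le> R" unfolding cm using \<tau> R by (simp add: mult_le_cancel_right1)
    moreover have "norm ((of_scalar \<mu> * X) ^ n) = 1"
      using \<tau> by (simp add: power_of_scalar_mult norm_of_scalar_mult norm_power cm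
          power_mult_distrib a_def mult.assoc)
    ultimately show False using rickart_step[OF Fi uc' _ N0] n by auto
  qed
  then show ?thesis by blast
qed

section \<open>The spectrum of a self-adjoint element is real\<close>

definition left_action :: "'a::cstar_algebra unitization \<Rightarrow> 'a \<Rightarrow> 'a" where
  "left_action u y = scaleC (scalar_part u) y + vector_part u * y"

lemma left_action_mult: "left_action (u * v) y = left_action u (left_action v y)"
  by (simp add: left_action_def scaleC_add_right scaleC_scaleC mult_scaleC_left mult_scaleC_right
      distrib_left distrib_right mult.assoc ac_simps)

lemma scalar_part_power: "scalar_part (u ^ n) = scalar_part u ^ n"
  by (induction n) simp_all

text \<open>A bound on the action of \<open>T\<close> on the algebra controls the norm of \<open>T\<^sup>n\<close> in the
  unitization, because the C*-identity bounds the vector part by its action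
  (\<open>norm_le_of_left_mult_bound\<close>).\<close>

lemma norm_power_le_of_left_action_bound:
  fixes T :: "'a::cstar_algebra unitization"
  assumes T: "\<And>y. norm (left_action T y) \<le> K * norm y" and K: "0 \<le> K"
  shows "norm (T ^ n) \<le> 2 * cmod (scalar_part T) ^ n + K ^ n"
proof -
  have act: "norm (left_action (T ^ n) y) \<le> K ^ n * norm y" for y
  proof (induction n)
    case (Suc n)
    have "norm (left_action (T ^ Suc n) y) \<le> K * norm (left_action (T ^ n) y)"
      using T by (simp add: left_action_mult)
    also have "\<dots> \<le> K * (K ^ n * norm y)" by (rule mult_left_mono[OF Suc K])
    finally show ?case by (simp add: mult.assoc)
  qed (simp add: left_action_def scaleC_one)
  have "norm (vector_part (T ^ n)) \<le> K ^ n + cmod (scalar_part T) ^ n"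
  proof (rule norm_le_of_left_mult_bound)
    fix y
    have "vector_part (T ^ n) * y = left_action (T ^ n) y - scaleC (scalar_part T ^ n) y"
      by (simp add: left_action_def scalar_part_power)
    then have "norm (vector_part (T ^ n) * y)
        \<le> norm (left_action (T ^ n) y) + norm (scaleC (scalar_part T ^ n) y)"
      by (simp add: norm_triangle_ineq4)
    also have "\<dots> \<le> (K ^ n + cmod (scalar_part T) ^ n) * norm y"
      using act[of y] by (simp add: norm_scaleC norm_power distrib_right)
    finally show "norm (vector_part (T ^ n) * y) \<le> (K ^ n + cmod (scalar_part T) ^ n) * norm y" .
  qed (simp add: K)
  then show ?thesis by (simp add: norm_unitization_def scalar_part_power norm_power)
qed

lemma invertible_of_left_action_bound:
  fixes T :: "'a::cstar_algebra unitization"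
  assumes T: "\<And>y. norm (left_action T y) \<le> K * norm y" and K: "0 \<le> K"
    and less: "cmod (scalar_part T) < cmod \<nu>" "K < cmod \<nu>"
  shows "\<exists>v. is_inverse (of_scalar \<nu> - T) v"
proof -
  have \<nu>: "\<nu> \<noteq> 0" using less by auto
  define u where "u = of_scalar (1 / \<nu>) * T"
  define \<gamma> where "\<gamma> = cmod (scalar_part T) / cmod \<nu>"
  define \<kappa> where "\<kappa> = K / cmod \<nu>"
  have "norm (u ^ n) = (1 / cmod \<nu>) ^ n * norm (T ^ n)" for n
    by (simp add: u_def power_of_scalar_mult norm_of_scalar_mult norm_power norm_divide)
  also have "\<dots> n \<le> (1 / cmod \<nu>) ^ n * (2 * cmod (scalar_part T) ^ n + K ^ n)" for n
    by (intro mult_left_mono norm_power_le_of_left_action_bound[OF T K]) simp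
  also have "\<dots> n = 2 * \<gamma> ^ n + \<kappa> ^ n" for n
    by (simp add: \<gamma>_def \<kappa>_def power_divide add_divide_distrib)
  finally have un: "norm (u ^ n) \<le> 2 * \<gamma> ^ n + \<kappa> ^ n" for n .
  have "summable (\<lambda>n. 2 * \<gamma> ^ n + \<kappa> ^ n)"
    using less \<nu> K by (intro summable_add summable_mult summable_geometric)
      (auto simp: \<gamma>_def \<kappa>_def divide_less_eq)
  then have "summable (\<lambda>n. norm (u ^ n))"
    by (rule summable_comparison_test[rotated]) (use un in auto)
  then have "is_inverse (of_scalar \<nu> * (1 - u)) ((\<Sum>n. u ^ n) * of_scalar (1 / \<nu>))"
    by (intro is_inverse_mult is_inverse_of_scalar \<nu> is_inverse_neumann_series)
  moreover have "of_scalar \<nu> * (1 - u) = of_scalar \<nu> - T"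
    using \<nu> by (simp add: u_def algebra_simps mult.assoc[symmetric] of_scalar_mult[symmetric])
  ultimately show ?thesis by auto
qed

lemma invertible_of_norm_less:
  fixes b :: "'a::cstar_algebra"
  assumes "norm b < cmod z"
  shows "\<exists>v. is_inverse (of_scalar z - of_vector b) v"
  using assms norm_ge_zero[of b]
  by (intro invertible_of_left_action_bound[where K = "norm b"])
    (auto simp: left_action_def of_vector_def norm_mult_ineq)

text \<open>For self-adjoint \<open>b\<close> and real \<open>t\<close>, \<open>\<parallel>i t y + b y\<parallel>\<^sup>2 \<le> t\<^sup>2 \<parallel>y\<parallel>\<^sup>2 + \<parallel>b y\<parallel>\<^sup>2\<close> because the
  cross terms of \<open>(i t y + b y)\<^sup>* (i t y + b y)\<close> cancel.\<close>

lemma norm_imaginary_shift_le: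
  fixes b y :: "'a::cstar_algebra"
  assumes sa: "adj b = b"
  shows "norm (scaleC (\<i> * of_real t) y + b * y) \<le> sqrt (t\<^sup>2 + (norm b)\<^sup>2) * norm y"
proof -
  define c where "c = \<i> * complex_of_real t"
  define w where "w = scaleC c y + b * y"
  have "adj w * w = (scaleC (- c) (adj y) + adj y * b) * (scaleC c y + b * y)"
    by (simp add: w_def adj_add adj_scaleC adj_mult sa c_def)
  also have "\<dots> = scaleC (- c) (adj y) * scaleC c y + scaleC (- c) (adj y) * (b * y)
      + (adj y * b * scaleC c y + adj y * b * (b * y))"
    by (simp only: distrib_left distrib_right add_ac)
  also have "\<dots> = scaleC (- c * c) (adj y * y)
      + (scaleC (- c) (adj y * (b * y)) + scaleC c (adj y * (b * y))) + adj (b * y) * (b * y)"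
    by (simp add: mult_scaleC_left mult_scaleC_right scaleC_scaleC mult.assoc adj_mult sa add.assoc)
  also have "scaleC (- c) (adj y * (b * y)) + scaleC c (adj y * (b * y)) = 0"
    by (simp add: scaleC_add_left[symmetric])
  also have "- c * c = complex_of_real (t\<^sup>2)"
    by (simp add: c_def power2_eq_square algebra_simps)
  finally have e: "adj w * w = scaleR (t\<^sup>2) (adj y * y) + adj (b * y) * (b * y)"
    by (simp add: scaleR_scaleC)
  have "(norm w)\<^sup>2 = norm (adj w * w)" by (simp add: cstar_identity power2_eq_square)
  also have "\<dots> \<le> t\<^sup>2 * (norm y)\<^sup>2 + (norm (b * y))\<^sup>2"
    unfolding e using norm_triangle_ineq by (simp add: norm_triangle_le cstar_identity power2_eq_square)
  also have "\<dots> \<le> t\<^sup>2 * (norm y)\<^sup>2 + (norm b * norm y)\<^sup>2"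
    by (intro add_left_mono power_mono norm_mult_ineq) simp
  also have "\<dots> = (sqrt (t\<^sup>2 + (norm b)\<^sup>2) * norm y)\<^sup>2"
    by (simp add: power_mult_distrib algebra_simps)
  finally show ?thesis unfolding w_def c_def by (rule power2_le_imp_le) simp
qed

text \<open>For \<open>z\<close> off the real line, shift \<open>z - b\<close> by a large imaginary multiple \<open>i t\<close> of the
  identity; the choice of \<open>t\<close> makes both \<open>\<bar>i t\<bar>\<close> and the bound of \<open>norm_imaginary_shift_le\<close>
  smaller than \<open>\<bar>z + i t\<bar>\<close>.\<close>

lemma invertible_of_Im_nonzero:
  fixes b :: "'a::cstar_algebra"
  assumes sa: "adj b = b" and im: "Im z \<noteq> 0"
  shows "\<exists>v. is_inverse (of_scalar z - of_vector b) v"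
proof -
  define t where "t = ((norm b)\<^sup>2 + 1) / (2 * Im z)"
  define \<gamma> where "\<gamma> = \<i> * complex_of_real t"
  define \<nu> where "\<nu> = z + \<gamma>"
  define K where "K = sqrt (t\<^sup>2 + (norm b)\<^sup>2)"
  have "2 * Im z * t = (norm b)\<^sup>2 + 1" using im by (simp add: t_def)
  then have \<nu>2: "(cmod \<nu>)\<^sup>2 = (Re z)\<^sup>2 + (Im z)\<^sup>2 + (norm b)\<^sup>2 + 1 + t\<^sup>2"
    unfolding cmod_power2 by (simp add: \<nu>_def \<gamma>_def power2_eq_square algebra_simps)
  have "K\<^sup>2 = t\<^sup>2 + (norm b)\<^sup>2" "(cmod \<gamma>)\<^sup>2 = t\<^sup>2"
    by (simp_all add: K_def \<gamma>_def norm_mult)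
  then have "K\<^sup>2 < (cmod \<nu>)\<^sup>2" "(cmod \<gamma>)\<^sup>2 < (cmod \<nu>)\<^sup>2"
    using \<nu>2 zero_le_power2[of "Re z"] zero_le_power2[of "Im z"] zero_le_power2[of "norm b"]
    by linarith+
  then have less: "K < cmod \<nu>" "cmod \<gamma> < cmod \<nu>"
    by (simp_all add: K_def power2_less_imp_less)
  have "norm (left_action (Unitization \<gamma> b) y) \<le> K * norm y" for y
    unfolding left_action_def \<gamma>_def K_def using norm_imaginary_shift_le[OF sa] by simp
  then obtain v where "is_inverse (of_scalar \<nu> - Unitization \<gamma> b) v"
    using invertible_of_left_action_bound[of _ K] less by (force simp: K_def)
  moreover have "of_scalar \<nu> - Unitization \<gamma> b = of_scalar z - of_vector b"
    by (simp add: unitization_eq_iff \<nu>_def)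
  ultimately show ?thesis by auto
qed

lemma invertible_outside_real_interval:
  fixes b :: "'a::cstar_algebra"
  assumes sa: "adj b = b" and nb: "norm b \<le> r"
    and z: "\<And>x. z = complex_of_real x \<Longrightarrow> r < \<bar>x\<bar>"
  shows "\<exists>v. is_inverse (of_vector b - of_scalar z) v"
proof -
  have "\<exists>v. is_inverse (of_scalar z - of_vector b) v"
  proof (cases "Im z = 0")
    case True
    then have "r < \<bar>Re z\<bar>" using z[of "Re z"] by (simp add: complex_eq_iff)
    then show ?thesis using True nb by (intro invertible_of_norm_less) (simp add: cmod_def)
  qed (rule invertible_of_Im_nonzero[OF sa])
  then show ?thesis by (metis is_inverse_minus minus_diff_eq)
qed

section \<open>Polynomials in a self-adjoint element\<close>

definition upoly :: "complex poly \<Rightarrow> 'a::cstar_algebra unitization \<Rightarrow> 'a unitization" where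
  "upoly p u = fold_coeffs (\<lambda>c v. of_scalar c + u * v) p 0"

lemma upoly_0 [simp]: "upoly 0 u = 0"
  by (simp add: upoly_def)

lemma upoly_pCons [simp]: "upoly (pCons c p) u = of_scalar c + u * upoly p u"
  by (cases "p = 0 \<and> c = 0") (auto simp: upoly_def)

lemma upoly_add: "upoly (p + q) u = upoly p u + upoly q u"
proof (induction p arbitrary: q)
  case (pCons a p)
  then show ?case by (cases q) (simp add: of_scalar_add distrib_left)
qed simp

lemma upoly_smult: "upoly (smult c p) u = of_scalar c * upoly p u"
proof (induction p)
  case (pCons a p)
  have "u * (of_scalar c * upoly p u) = of_scalar c * (u * upoly p u)"
    by (metis mult.assoc of_scalar_commute)
  then show ?case by (simp add: pCons.IH of_scalar_mult distrib_left)
qed simp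

lemma upoly_minus: "upoly (- p) u = - upoly p u"
  using upoly_smult[of "-1" p u] by (simp add: of_scalar_minus)

lemma upoly_diff: "upoly (p - q) u = upoly p u - upoly q u"
  using upoly_add[of p "- q" u] by (simp add: upoly_minus)

lemma upoly_mult: "upoly (p * q) u = upoly p u * upoly q u"
  by (induction p) (simp_all add: upoly_add upoly_smult distrib_right mult.assoc)

lemma upoly_one [simp]: "upoly 1 u = 1"
  by (simp add: one_pCons)

lemma scalar_part_upoly: "scalar_part (upoly p u) = poly p (scalar_part u)"
  by (induction p) simp_all

lemma upoly_commute: "u * upoly p u = upoly p u * u"
proof (induction p)
  case (pCons a p)
  have "u * upoly (pCons a p) u = u * of_scalar a + u * (u * upoly p u)"
    by (simp add: distrib_left)
  also have "\<dots> = of_scalar a * u + u * (upoly p u * u)" by (simp add: of_scalar_commute pCons.IH)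
  finally show ?case by (simp add: distrib_right mult.assoc)
qed simp

lemma invertible_upoly_prod_mset:
  assumes "\<And>z. z \<in># M \<Longrightarrow> \<exists>v. is_inverse (upoly (f z) u) v"
  shows "\<exists>v. is_inverse (upoly (\<Prod>z\<in>#M. f z) u) v"
  using assms
proof (induction M)
  case (add z M)
  obtain v where v: "is_inverse (upoly (f z) u) v" using add.prems by auto
  obtain w where w: "is_inverse (upoly (\<Prod>z\<in>#M. f z) u) w" using add.IH add.prems by auto
  show ?case using is_inverse_mult[OF v w] by (auto simp: upoly_mult)
qed (auto intro: is_inverse_one)

lemma invertible_upoly_of_roots:
  assumes p: "p \<noteq> 0"
    and roots: "\<And>z. poly p z = 0 \<Longrightarrow> \<exists>v. is_inverse (u - of_scalar z) v"
  shows "\<exists>v. is_inverse (upoly p u) v"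
proof -
  define P where "P = (\<Prod>z\<in>#proots p. [:- z, 1:])"
  obtain v where v: "is_inverse (upoly P u) v"
    using invertible_upoly_prod_mset[of "proots p" "\<lambda>z. [:- z, 1:]" u] roots p
    by (auto simp: P_def of_scalar_minus)
  have "upoly (smult (lead_coeff p) P) u = of_scalar (lead_coeff p) * upoly P u"
    by (rule upoly_smult)
  then have "upoly p u = of_scalar (lead_coeff p) * upoly P u"
    by (simp only: P_def complex_poly_decompose_multiset)
  moreover have "lead_coeff p \<noteq> 0" using p by simp
  note is_inverse_mult[OF is_inverse_of_scalar[OF this] v]
  ultimately show ?thesis by auto
qed

definition unitization_adj :: "'a::cstar_algebra unitization \<Rightarrow> 'a unitization" where
  "unitization_adj u = Unitization (cnj (scalar_part u)) (adj (vector_part u))"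

lemma unitization_adj_upoly:
  assumes real: "\<And>i. cnj (coeff p i) = coeff p i" and sa: "unitization_adj u = u"
  shows "unitization_adj (upoly p u) = upoly p u"
  using real
proof (induction p)
  case (pCons a p)
  have "cnj a = a" "\<And>i. cnj (coeff p i) = coeff p i"
    using pCons.prems[of 0] pCons.prems[of "Suc i" for i] by simp_all
  then show ?case
    using pCons.IH upoly_commute[of u p] sa
    by (simp add: unitization_adj_def unitization_eq_iff adj_add adj_scaleC adj_mult ac_simps)
qed (simp add: unitization_adj_def unitization_eq_iff)

text \<open>Taking the vector part drops the constant term, so \<open>peval b p\<close> is \<open>p(b)\<close> only when
  \<open>p(0) = 0\<close>; this is the only case used.\<close>

definition peval :: "'a::cstar_algebra \<Rightarrow> real poly \<Rightarrow> 'a" where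
  "peval b p = vector_part (upoly (map_poly complex_of_real p) (of_vector b))"

lemma poly_map_poly_of_real:
  "poly (map_poly complex_of_real p) (complex_of_real x) = complex_of_real (poly p x)"
  by (induction p) (auto simp: map_poly_pCons)

lemma of_vector_peval:
  assumes "poly p 0 = 0"
  shows "of_vector (peval b p) = upoly (map_poly complex_of_real p) (of_vector b)"
  using poly_map_poly_of_real[of p 0] assms
  by (simp add: peval_def unitization_eq_iff scalar_part_upoly)

lemma map_poly_of_real_mult:
  "map_poly complex_of_real (p * q) = map_poly complex_of_real p * map_poly complex_of_real q"
  and map_poly_of_real_diff:
  "map_poly complex_of_real (p - q) = map_poly complex_of_real p - map_poly complex_of_real q"
  by (simp_all add: poly_eq_iff coeff_map_poly coeff_mult)

lemma peval_mult: "poly p 0 = 0 \<Longrightarrow> poly q 0 = 0 \<Longrightarrow> peval b (p * q) = peval b p * peval b q"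
  and peval_diff: "poly p 0 = 0 \<Longrightarrow> poly q 0 = 0 \<Longrightarrow> peval b (p - q) = peval b p - peval b q"
  by (simp_all add: of_vector_eq_iff[symmetric] of_vector_mult of_vector_diff of_vector_peval
      upoly_mult upoly_diff map_poly_of_real_mult map_poly_of_real_diff)

lemma peval_X: "peval b [:0, 1:] = b"
  by (simp add: peval_def map_poly_pCons)

lemma adj_peval: "adj b = b \<Longrightarrow> adj (peval b p) = peval b p"
  using unitization_adj_upoly[of "map_poly complex_of_real p" "of_vector b"]
  by (simp add: peval_def unitization_adj_def unitization_eq_iff coeff_map_poly)

lemma norm_power_of_self_adjoint:
  fixes a :: "'a::cstar_algebra"
  assumes "adj a = a"
  shows "norm (of_vector a ^ (2 ^ k)) = norm a ^ (2 ^ k)"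
  using assms
proof (induction k arbitrary: a)
  case (Suc k)
  have "of_vector a ^ (2 ^ Suc k) = of_vector (a * a) ^ (2 ^ k)"
    by (simp add: power_mult power2_eq_square of_vector_mult)
  moreover have "adj (a * a) = a * a" "norm (a * a) = norm a ^ 2"
    using Suc.prems cstar_identity[of a] by (simp_all add: adj_mult power2_eq_square)
  ultimately show ?case using Suc.IH by (simp add: power_mult[symmetric])
qed simp

text \<open>The spectral mapping step: if \<open>\<bar>p\<bar> \<le> m\<close> on the interval \<open>[-1, 1]\<close> containing the
  spectrum of \<open>b\<close>, then \<open>1 - \<mu> p(b)\<close> is invertible for \<open>\<bar>\<mu>\<bar> m < 1\<close>, because no root of
  \<open>1 - \<mu> p\<close> lies in \<open>[-1, 1]\<close>.\<close>

lemma invertible_one_minus_scaled_peval: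
  fixes b :: "'a::cstar_algebra"
  assumes sa: "adj b = b" and nb: "norm b \<le> 1" and p0: "poly p 0 = 0"
    and pm: "\<And>t. t \<in> {-1..1} \<Longrightarrow> \<bar>poly p t\<bar> \<le> m" and \<mu>: "cmod \<mu> * m < 1"
  shows "\<exists>v. is_inverse (1 - of_scalar \<mu> * of_vector (peval b p)) v"
proof -
  define Q where "Q = 1 - smult \<mu> (map_poly complex_of_real p)"
  have "poly Q 0 = 1"
    using poly_map_poly_of_real[of p 0] p0 by (simp add: Q_def)
  then have "Q \<noteq> 0" by auto
  moreover have "\<exists>v. is_inverse (of_vector b - of_scalar z) v" if z: "poly Q z = 0" for z
  proof (rule invertible_outside_real_interval[OF sa nb])
    fix x assume zx: "z = complex_of_real x"
    show "1 < \<bar>x\<bar>"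
    proof (rule ccontr)
      assume "\<not> 1 < \<bar>x\<bar>"
      then have "x \<in> {-1..1}" by auto
      then have "\<bar>poly p x\<bar> \<le> m" by (rule pm)
      then have "cmod (\<mu> * complex_of_real (poly p x)) \<le> cmod \<mu> * m"
        by (simp add: norm_mult mult_left_mono)
      moreover have "poly Q z = 1 - \<mu> * complex_of_real (poly p x)"
        by (simp add: Q_def zx poly_map_poly_of_real)
      ultimately show False using z \<mu> by auto
    qed
  qed
  ultimately have "\<exists>v. is_inverse (upoly Q (of_vector b)) v"
    by (rule invertible_upoly_of_roots)
  then show ?thesis by (simp add: Q_def upoly_diff upoly_smult of_vector_peval[OF p0])
qed

theorem norm_peval_le:
  fixes b :: "'a::cstar_algebra"
  assumes sa: "adj b = b" and nb: "norm b \<le> 1" and p0: "poly p 0 = 0"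
    and pm: "\<And>t. t \<in> {-1..1} \<Longrightarrow> \<bar>poly p t\<bar> \<le> m"
  shows "norm (peval b p) \<le> m"
proof (rule ccontr)
  define s where "s = peval b p"
  assume "\<not> norm (peval b p) \<le> m"
  then have ms: "m < norm s" by (simp add: s_def)
  have m0: "0 \<le> m" using pm[of 0] by simp
  then have s0: "norm s > 0" using ms by linarith
  define R where "R = 1 / norm s"
  have R: "R > 0" "R * m < 1" "R * norm s = 1" using ms s0 by (simp_all add: R_def)
  have "\<exists>v. is_inverse (1 - of_scalar \<mu> * of_vector s) v" if "cmod \<mu> \<le> R" for \<mu>
    unfolding s_def using R(2) that m0 mult_right_mono[OF that m0]
    by (intro invertible_one_minus_scaled_peval[OF sa nb p0 pm]) auto
  then obtain N where N: "\<And>n. n \<ge> N \<Longrightarrow> R ^ n * norm (of_vector s ^ n) < 1"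
    using rickart_power_bound[OF R(1)] by blast
  have "N \<le> 2 ^ N" using less_exp[of N] by simp
  from N[OF this] have "(R * norm s) ^ (2 ^ N) < 1"
    by (simp add: norm_power_of_self_adjoint[OF adj_peval[OF sa]] s_def power_mult_distrib)
  then show False using R(3) by simp
qed

section \<open>A continuous functional calculus for self-adjoint contractions\<close>

text \<open>\<open>is_cfc b F z\<close> says that \<open>z = F(b)\<close>: \<open>z\<close> is approximated by \<open>p(b)\<close> whenever \<open>p\<close>
  approximates \<open>F\<close> uniformly on \<open>[-1, 1]\<close>. Polynomials are normalised by \<open>p(0) = 0\<close> since the
  algebra need not have a unit, so only functions with \<open>F 0 = 0\<close> can be represented.\<close>

definition is_cfc :: "'a::cstar_algebra \<Rightarrow> (real \<Rightarrow> real) \<Rightarrow> 'a \<Rightarrow> bool" where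
  "is_cfc b F z \<longleftrightarrow> (\<forall>e>0. \<exists>p. poly p 0 = 0 \<and> (\<forall>t\<in>{-1..1}. \<bar>F t - poly p t\<bar> \<le> e)
     \<and> norm (z - peval b p) \<le> e)"

lemma polynomial_approximation_vanishing_at_0:
  fixes F :: "real \<Rightarrow> real"
  assumes cont: "continuous_on {-1..1} F" and F0: "F 0 = 0" and e: "e > 0"
  shows "\<exists>p. poly p 0 = 0 \<and> (\<forall>t\<in>{-1..1}. \<bar>F t - poly p t\<bar> \<le> e)"
proof -
  obtain g :: "real \<Rightarrow> real" where g: "polynomial_function g"
    and gF: "\<forall>x\<in>{-1..1::real}. norm (F x - g x) < e/2"
    using Stone_Weierstrass_polynomial_function[OF compact_Icc cont, of "e/2"] e by auto
  have "real_polynomial_function g" using g by (simp add: real_polynomial_function_eq)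
  then obtain a n where gs: "g = (\<lambda>x. \<Sum>i\<le>n. a i * x ^ i)"
    unfolding real_polynomial_function_iff_sum by blast
  define p where "p = (\<Sum>i\<le>n. monom (a i) i) - [:g 0:]"
  have pg: "poly p x = g x - g 0" for x by (simp add: p_def gs poly_sum poly_monom)
  have g0: "\<bar>F 0 - g 0\<bar> < e/2" using gF by auto
  have "\<bar>F t - poly p t\<bar> \<le> e" if "t \<in> {-1..1}" for t
  proof -
    have "\<bar>F t - g t\<bar> < e/2" using gF that by auto
    then show ?thesis using g0 F0 unfolding pg by arith
  qed
  then show ?thesis by (intro exI[of _ p]) (simp add: pg)
qed

lemma norm_mult_diff_le:
  fixes z z' w w' :: "'a::real_normed_algebra"
  shows "norm (z * w - z' * w') \<le> norm (z - z') * norm w + norm z' * norm (w - w')"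
proof -
  have "z * w - z' * w' = (z - z') * w + z' * (w - w')" by (simp add: algebra_simps)
  then show ?thesis by (metis add_mono norm_mult_ineq norm_triangle_le)
qed

lemma limit_of_norm_diff_le_inverse_Suc:
  fixes X :: "nat \<Rightarrow> 'a::banach"
  assumes dX: "\<And>m n. norm (X m - X n) \<le> 1 / Suc m + 1 / Suc n"
  obtains z where "\<And>n. norm (z - X n) \<le> 2 / Suc n"
proof -
  have mono: "1 / real (Suc m) \<le> 1 / real (Suc n)" if "n \<le> m" for m n
    using that by (simp add: frac_le)
  have "Cauchy X"
    unfolding Cauchy_def
  proof (intro allI impI)
    fix e :: real assume "e > 0"
    then obtain M where M: "1 / Suc M < e / 2" by (metis half_gt_zero nat_approx_posE)
    have "dist (X m) (X n) < e" if "M \<le> m" "M \<le> n" for m n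
      using dX[of m n] mono[OF that(1)] mono[OF that(2)] M by (simp add: dist_norm)
    then show "\<exists>M. \<forall>m\<ge>M. \<forall>n\<ge>M. dist (X m) (X n) < e" by blast
  qed
  then obtain z where z: "X \<longlonglongrightarrow> z" using Cauchy_convergent_iff convergent_def by blast
  have "norm (z - X n) \<le> 2 / Suc n" for n
  proof (rule Lim_bounded)
    show "(\<lambda>m. norm (X m - X n)) \<longlonglongrightarrow> norm (z - X n)" by (intro tendsto_intros z)
    show "\<forall>m\<ge>n. norm (X m - X n) \<le> 2 / real (Suc n)"
    proof (intro allI impI)
      fix m assume "n \<le> m"
      then show "norm (X m - X n) \<le> 2 / real (Suc n)" using dX[of m n] mono[of n m] by simp
    qed
  qed
  then show ?thesis by (rule that)
qed

context
  fixes b :: "'a::cstar_algebra"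
  assumes sa: "adj b = b" and nb: "norm b \<le> 1"
begin

lemma norm_peval_diff_le:
  assumes "poly p 0 = 0" "poly q 0 = 0"
    and "\<And>t. t \<in> {-1..1} \<Longrightarrow> \<bar>F t - poly p t\<bar> \<le> d" "\<And>t. t \<in> {-1..1} \<Longrightarrow> \<bar>F t - poly q t\<bar> \<le> e"
  shows "norm (peval b p - peval b q) \<le> d + e"
proof -
  have "norm (peval b (p - q)) \<le> d + e"
  proof (rule norm_peval_le[OF sa nb])
    fix t :: real assume "t \<in> {-1..1}"
    then show "\<bar>poly (p - q) t\<bar> \<le> d + e" using assms(3,4)[of t] by (simp add: abs_le_iff)
  qed (use assms(1,2) in simp)
  then show ?thesis using assms(1,2) by (simp add: peval_diff)
qed

lemma norm_peval_le_approx: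
  assumes "poly p 0 = 0" and "\<And>t. t \<in> {-1..1} \<Longrightarrow> \<bar>F t - poly p t\<bar> \<le> d"
    and "\<And>t. t \<in> {-1..1} \<Longrightarrow> \<bar>F t\<bar> \<le> M"
  shows "norm (peval b p) \<le> M + d"
proof (rule norm_peval_le[OF sa nb assms(1)])
  fix t :: real assume "t \<in> {-1..1}"
  then show "\<bar>poly p t\<bar> \<le> M + d" using assms(2,3)[of t] by linarith
qed

lemma is_cfc_unique:
  assumes "is_cfc b F z" "is_cfc b F z'"
  shows "z = z'"
proof -
  have four: "norm (z - z') \<le> 4 * e" if e: "e > 0" for e
  proof -
    obtain p where p: "poly p 0 = 0" "\<forall>t\<in>{-1..1}. \<bar>F t - poly p t\<bar> \<le> e" "norm (z - peval b p) \<le> e"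
      using assms(1) e unfolding is_cfc_def by blast
    obtain q where q: "poly q 0 = 0" "\<forall>t\<in>{-1..1}. \<bar>F t - poly q t\<bar> \<le> e" "norm (z' - peval b q) \<le> e"
      using assms(2) e unfolding is_cfc_def by blast
    have "norm (peval b p - peval b q) \<le> e + e"
      using p q by (intro norm_peval_diff_le) auto
    moreover have "norm (z - z') = norm ((z - peval b p) + (peval b p - peval b q) - (z' - peval b q))"
      by simp
    ultimately show ?thesis
      using p(3) q(3) norm_triangle_ineq4[of "(z - peval b p) + (peval b p - peval b q)" "z' - peval b q"]
        norm_triangle_ineq[of "z - peval b p" "peval b p - peval b q"] by linarith
  qed
  have "norm (z - z') \<le> 0"
  proof (rule field_le_epsilon)
    fix e :: real assume "e > 0"
    then show "norm (z - z') \<le> 0 + e" using four[of "e/4"] by simp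
  qed
  then show ?thesis by simp
qed

lemma norm_le_of_is_cfc:
  assumes "is_cfc b F z" "\<And>t. t \<in> {-1..1} \<Longrightarrow> \<bar>F t\<bar> \<le> M"
  shows "norm z \<le> M"
proof (rule field_le_epsilon)
  fix e :: real assume e: "e > 0"
  obtain p where p: "poly p 0 = 0" "\<forall>t\<in>{-1..1}. \<bar>F t - poly p t\<bar> \<le> e/2" "norm (z - peval b p) \<le> e/2"
    using assms(1) e unfolding is_cfc_def by (meson half_gt_zero)
  have "norm (peval b p) \<le> M + e/2" using p assms(2) by (intro norm_peval_le_approx) auto
  then show "norm z \<le> M + e" using p(3) norm_triangle_sub[of z "peval b p"] by linarith
qed

lemma is_cfc_cong:
  assumes "is_cfc b F z" "\<And>t. t \<in> {-1..1} \<Longrightarrow> F t = G t"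
  shows "is_cfc b G z"
  using assms unfolding is_cfc_def by simp

lemma is_cfc_ident: "is_cfc b (\<lambda>t. t) b"
  unfolding is_cfc_def by (intro allI impI exI[of _ "[:0, 1:]"]) (simp add: peval_X)

lemma is_cfc_diff:
  assumes "is_cfc b F z" "is_cfc b G w"
  shows "is_cfc b (\<lambda>t. F t - G t) (z - w)"
  unfolding is_cfc_def
proof (intro allI impI)
  fix e :: real assume e: "e > 0"
  obtain p where p: "poly p 0 = 0" "\<forall>t\<in>{-1..1}. \<bar>F t - poly p t\<bar> \<le> e/2" "norm (z - peval b p) \<le> e/2"
    using assms(1) e unfolding is_cfc_def by (meson half_gt_zero)
  obtain q where q: "poly q 0 = 0" "\<forall>t\<in>{-1..1}. \<bar>G t - poly q t\<bar> \<le> e/2" "norm (w - peval b q) \<le> e/2"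
    using assms(2) e unfolding is_cfc_def by (meson half_gt_zero)
  have "z - w - peval b (p - q) = (z - peval b p) - (w - peval b q)"
    using p q by (simp add: peval_diff)
  then have "norm (z - w - peval b (p - q)) \<le> norm (z - peval b p) + norm (w - peval b q)"
    by (metis norm_triangle_ineq4)
  then have "norm (z - w - peval b (p - q)) \<le> e" using p(3) q(3) by linarith
  moreover have "\<bar>F t - G t - poly (p - q) t\<bar> \<le> e" if "t \<in> {-1..1}" for t
  proof -
    have "\<bar>F t - poly p t\<bar> \<le> e/2" "\<bar>G t - poly q t\<bar> \<le> e/2" using p(2) q(2) that by auto
    then show ?thesis unfolding poly_diff by arith
  qed
  ultimately show "\<exists>r. poly r 0 = 0 \<and> (\<forall>t\<in>{-1..1}. \<bar>F t - G t - poly r t\<bar> \<le> e)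
      \<and> norm (z - w - peval b r) \<le> e"
    using p q by (intro exI[of _ "p - q"]) simp
qed

lemma is_cfc_mult:
  assumes "is_cfc b F z" "is_cfc b G w"
    and FM: "\<And>t. t \<in> {-1..1} \<Longrightarrow> \<bar>F t\<bar> \<le> M" and GM: "\<And>t. t \<in> {-1..1} \<Longrightarrow> \<bar>G t\<bar> \<le> M"
  shows "is_cfc b (\<lambda>t. F t * G t) (z * w)"
  unfolding is_cfc_def
proof (intro allI impI)
  fix e :: real assume e: "e > 0"
  have M0: "M \<ge> 0" using FM[of 0] by simp
  define d where "d = min 1 (e / (2 * M + 1 + norm w))"
  have d: "d > 0" "d \<le> 1" "d * (2 * M + 1 + norm w) \<le> e"
    using e M0 by (auto simp: d_def min_def field_simps add_pos_nonneg)
  have "d * d \<le> d" "0 \<le> d * M" "0 \<le> d * norm w" using d M0 by (simp_all add: mult_left_le_one_le)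
  moreover have "d * (2 * M + 1 + norm w) = 2 * (d * M) + d + d * norm w"
    "(M + d) * d = d * M + d * d" by (simp_all add: algebra_simps)
  ultimately have small: "d * M + (M + d) * d \<le> e" "d * norm w + (M + d) * d \<le> e"
    using d(3) by linarith+
  obtain p where p: "poly p 0 = 0" "\<forall>t\<in>{-1..1}. \<bar>F t - poly p t\<bar> \<le> d" "norm (z - peval b p) \<le> d"
    using assms(1) d unfolding is_cfc_def by blast
  obtain q where q: "poly q 0 = 0" "\<forall>t\<in>{-1..1}. \<bar>G t - poly q t\<bar> \<le> d" "norm (w - peval b q) \<le> d"
    using assms(2) d unfolding is_cfc_def by blast
  have "\<bar>F t * G t - poly (p * q) t\<bar> \<le> e" if t: "t \<in> {-1..1}" for t
  proof -
    have "\<bar>poly p t\<bar> \<le> M + d" using p(2) FM[OF t] t by fastforce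
    then have "\<bar>F t - poly p t\<bar> * \<bar>G t\<bar> + \<bar>poly p t\<bar> * \<bar>G t - poly q t\<bar> \<le> d * M + (M + d) * d"
      using p(2) q(2) t GM[OF t] d by (intro add_mono mult_mono) auto
    then show ?thesis
      using norm_mult_diff_le[where z = "F t" and z' = "poly p t" and w = "G t" and w' = "poly q t"] small by simp
  qed
  moreover have "norm (z * w - peval b (p * q)) \<le> e"
  proof -
    have "norm (z - peval b p) * norm w + norm (peval b p) * norm (w - peval b q)
        \<le> d * norm w + (M + d) * d"
      using p q FM d M0 norm_peval_le_approx[OF p(1), of F d M]
      by (intro add_mono mult_mono) auto
    then show ?thesis
      using norm_mult_diff_le[where z = z and z' = "peval b p" and w = w and w' = "peval b q"] small p(1) q(1)
      by (simp add: peval_mult)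
  qed
  ultimately show "\<exists>r. poly r 0 = 0 \<and> (\<forall>t\<in>{-1..1}. \<bar>F t * G t - poly r t\<bar> \<le> e)
      \<and> norm (z * w - peval b r) \<le> e"
    using p(1) by (intro exI[of _ "p * q"]) simp
qed

lemma is_cfc_exists:
  fixes F :: "real \<Rightarrow> real"
  assumes cont: "continuous_on {-1..1} F" and F0: "F 0 = 0"
  shows "\<exists>z. is_cfc b F z"
proof -
  have "\<forall>n. \<exists>p. poly p 0 = 0 \<and> (\<forall>t\<in>{-1..1}. \<bar>F t - poly p t\<bar> \<le> 1 / Suc n)"
    using polynomial_approximation_vanishing_at_0[OF cont F0] by simp
  then obtain P where P0: "\<And>n. poly (P n) 0 = 0"
    and PF: "\<And>n t. t \<in> {-1..1} \<Longrightarrow> \<bar>F t - poly (P n) t\<bar> \<le> 1 / Suc n"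
    by metis
  have "norm (peval b (P m) - peval b (P n)) \<le> 1 / Suc m + 1 / Suc n" for m n
    using P0 PF by (intro norm_peval_diff_le) auto
  then obtain z where z: "\<And>n. norm (z - peval b (P n)) \<le> 2 / Suc n"
    using limit_of_norm_diff_le_inverse_Suc[of "\<lambda>n. peval b (P n)"] by blast
  have "is_cfc b F z"
    unfolding is_cfc_def
  proof (intro allI impI)
    fix e :: real assume "e > 0"
    then obtain n where "1 / Suc n < e / 2" by (metis half_gt_zero nat_approx_posE)
    then have n: "1 / Suc n \<le> e" "2 / Suc n \<le> e" by (simp_all add: field_simps)
    then show "\<exists>p. poly p 0 = 0 \<and> (\<forall>t\<in>{-1..1}. \<bar>F t - poly p t\<bar> \<le> e) \<and> norm (z - peval b p) \<le> e"
      using P0[of n] PF[of _ n] z[of n] by (intro exI[of _ "P n"]) (fastforce intro: order_trans)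
  qed
  then show ?thesis by blast
qed

end

section \<open>A nonzero closed right ideal inside \<open>x A\<close>\<close>

definition ramp :: "real \<Rightarrow> real \<Rightarrow> real" where
  "ramp c t = min 1 (max 0 (c * \<bar>t\<bar> - 1))"

text \<open>A continuous substitute for \<open>ramp 8 t / t\<close>; the maximum only changes the denominator
  where \<open>ramp 8\<close> vanishes.\<close>

definition ramp_quotient :: "real \<Rightarrow> real" where
  "ramp_quotient t = ramp 8 t * t / max (t\<^sup>2) (1/64)"

lemma continuous_on_ramp: "continuous_on S (ramp c)"
  unfolding ramp_def by (intro continuous_intros)

lemma continuous_on_ramp_quotient: "continuous_on S ramp_quotient"
  unfolding ramp_quotient_def by (intro continuous_intros continuous_on_ramp) (auto simp: max_def)

lemma ramp_0 [simp]: "ramp c 0 = 0" and ramp_quotient_0 [simp]: "ramp_quotient 0 = 0"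
  by (simp_all add: ramp_def ramp_quotient_def)

lemma abs_ramp_le: "\<bar>ramp c t\<bar> \<le> 8"
  by (simp add: ramp_def)

lemma ramp_8_eq_0: "\<bar>t\<bar> < 1/8 \<Longrightarrow> ramp 8 t = 0"
  by (simp add: ramp_def)

lemma mult_ramp_quotient: "t * ramp_quotient t = ramp 8 t"
proof (cases "\<bar>t\<bar> < 1/8")
  case False
  then have "1/8 * (1/8) \<le> \<bar>t\<bar> * \<bar>t\<bar>" by (intro mult_mono) auto
  then have "max (t\<^sup>2) (1/64) = t\<^sup>2" by (simp add: power2_eq_square max_def)
  then show ?thesis using False by (simp add: ramp_quotient_def power2_eq_square)
qed (simp add: ramp_8_eq_0 ramp_quotient_def)

lemma abs_ramp_quotient_le: "\<bar>ramp_quotient t\<bar> \<le> 8"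
proof (cases "\<bar>t\<bar> < 1/8")
  case False
  then have "ramp_quotient t = ramp 8 t / t"
    using mult_ramp_quotient[of t] by (auto simp: eq_divide_eq mult.commute)
  then have "\<bar>ramp_quotient t\<bar> = \<bar>ramp 8 t\<bar> / \<bar>t\<bar>" by simp
  also have "\<dots> \<le> 1 / \<bar>t\<bar>" by (intro divide_right_mono) (auto simp: ramp_def)
  also have "\<dots> \<le> 8" using False by (simp add: field_simps)
  finally show ?thesis .
qed (simp add: ramp_8_eq_0 ramp_quotient_def)

lemma ramp_8_mult_ramp_4: "ramp 8 t * ramp 4 t = ramp 4 t"
  by (cases "\<bar>t\<bar> \<le> 1/4") (simp_all add: ramp_def)

lemma abs_diff_mult_ramp_4_le: "\<bar>t\<bar> \<le> 1 \<Longrightarrow> \<bar>t - t * ramp 4 t\<bar> \<le> 1/2"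
proof -
  assume t1: "\<bar>t\<bar> \<le> 1"
  consider "\<bar>t\<bar> \<le> 1/4" | "\<bar>t\<bar> \<ge> 1/2" | "1/4 < \<bar>t\<bar>" "\<bar>t\<bar> < 1/2" by linarith
  then show ?thesis
  proof cases
    case 3
    then have "t - t * ramp 4 t = t * (2 - 4 * \<bar>t\<bar>)" by (simp add: ramp_def algebra_simps)
    then have "\<bar>t - t * ramp 4 t\<bar> = \<bar>t\<bar> * (2 - 4 * \<bar>t\<bar>)" using 3 by (simp add: abs_mult)
    also have "\<dots> \<le> (1/2) * 1" using 3 by (intro mult_mono) auto
    finally show ?thesis by simp
  qed (use t1 in \<open>simp_all add: ramp_def\<close>)
qed

text \<open>With \<open>\<kappa> = ramp_quotient(b)\<close> and \<open>\<zeta> = ramp 4 (b)\<close> we get \<open>b \<kappa> \<zeta> = ramp 8 (b) \<zeta> = \<zeta>\<close>;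
  and \<open>\<zeta> \<noteq> 0\<close>, for otherwise \<open>\<parallel>b\<parallel> = \<parallel>b - b \<zeta>\<parallel> \<le> 1/2\<close>.\<close>

lemma exists_nonzero_fixed_by_mult:
  fixes b :: "'a::cstar_algebra"
  assumes sa: "adj b = b" and nb: "norm b = 1"
  shows "\<exists>\<kappa> \<zeta>. b * \<kappa> * \<zeta> = \<zeta> \<and> \<zeta> \<noteq> 0"
proof -
  have nb1: "norm b \<le> 1" using nb by simp
  note exists = is_cfc_exists[OF sa nb1] and unique = is_cfc_unique[OF sa nb1]
    and cong = is_cfc_cong[OF sa nb1] and ident = is_cfc_ident[OF sa nb1]
    and mult = is_cfc_mult[OF sa nb1] and diff = is_cfc_diff[OF sa nb1]
  obtain \<kappa> where \<kappa>: "is_cfc b ramp_quotient \<kappa>"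
    using exists[OF continuous_on_ramp_quotient] by auto
  obtain U where U: "is_cfc b (ramp 8) U" using exists[OF continuous_on_ramp] by auto
  obtain \<zeta> where \<zeta>: "is_cfc b (ramp 4) \<zeta>" using exists[OF continuous_on_ramp] by auto
  have id8: "\<bar>t\<bar> \<le> 8" if "t \<in> {-1..1}" for t :: real using that by auto
  have "is_cfc b (\<lambda>t. t * ramp_quotient t) (b * \<kappa>)"
    using mult[OF ident \<kappa> id8 abs_ramp_quotient_le] .
  then have "b * \<kappa> = U" using U unique cong by (simp add: mult_ramp_quotient)
  moreover have "is_cfc b (\<lambda>t. ramp 8 t * ramp 4 t) (U * \<zeta>)"
    using mult[OF U \<zeta> abs_ramp_le abs_ramp_le] .
  then have "U * \<zeta> = \<zeta>" using \<zeta> unique cong by (simp add: ramp_8_mult_ramp_4)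
  moreover have "\<zeta> \<noteq> 0"
  proof
    assume "\<zeta> = 0"
    then have "is_cfc b (\<lambda>t. t - t * ramp 4 t) b"
      using diff[OF ident mult[OF ident \<zeta> id8 abs_ramp_le]] by simp
    then have "norm b \<le> 1/2"
    proof (rule norm_le_of_is_cfc[OF sa nb1])
      fix t :: real assume "t \<in> {-1..1}"
      then show "\<bar>t - t * ramp 4 t\<bar> \<le> 1/2" by (intro abs_diff_mult_ramp_4_le) auto
    qed
    then show False using nb by simp
  qed
  ultimately show ?thesis by blast
qed

lemma exists_nonzero_fixed_by_left_mult:
  fixes x :: "'a::cstar_algebra"
  assumes "x \<noteq> 0"
  shows "\<exists>c z. x * c * z = z \<and> z \<noteq> 0"
proof -
  define h where "h = x * adj x"
  have nh: "norm h = norm x * norm x" by (simp add: h_def cstar_identity_right)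
  then have nh0: "norm h > 0" using assms by simp
  define b where "b = scaleR (1 / norm h) h"
  have "adj b = b" by (simp add: b_def h_def adj_scaleR adj_mult adj_adj)
  moreover have "norm b = 1" using nh0 by (simp add: b_def)
  ultimately obtain \<kappa> \<zeta> where "b * \<kappa> * \<zeta> = \<zeta>" "\<zeta> \<noteq> 0"
    using exists_nonzero_fixed_by_mult by blast
  moreover have "x * scaleR (1 / norm h) (adj x * \<kappa>) = b * \<kappa>"
    by (simp add: b_def h_def mult.assoc)
  ultimately show ?thesis by metis
qed

lemma closed_right_ideal_fixed_by_left_mult:
  fixes u :: "'a::cstar_algebra"
  shows "closed_right_ideal {w. u * w = w}"
  unfolding closed_right_ideal_def right_ideal_def
  by (simp add: distrib_left mult_scaleC_right mult.assoc[symmetric] closed_Collect_eq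
      continuous_on_mult_left)

theorem mainTheorem1:
  fixes J :: "'a::cstar_algebra set"
  assumes "closed_right_ideal J"
    and "topologically_essential J"
  shows "essential J"
  unfolding essential_def
proof (intro allI impI)
  fix I :: "'a set" assume I: "right_ideal I \<and> I \<noteq> {0}"
  then obtain x where xI: "x \<in> I" and "x \<noteq> 0" by (auto simp: right_ideal_def)
  then obtain c z where "x * c * z = z" "z \<noteq> 0" using exists_nonzero_fixed_by_left_mult by blast
  define K where "K = {w. x * c * w = w}"
  have "closed_right_ideal K" unfolding K_def by (rule closed_right_ideal_fixed_by_left_mult)
  moreover have "K \<noteq> {0}" using \<open>x * c * z = z\<close> \<open>z \<noteq> 0\<close> by (auto simp: K_def)
  ultimately have "J \<inter> K \<noteq> {0}" using assms(2) by (simp add: topologically_essential_def)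
  moreover have "0 \<in> J \<inter> K"
    using assms(1) by (simp add: closed_right_ideal_def right_ideal_def K_def)
  ultimately obtain y where "y \<in> J" "y \<in> K" "y \<noteq> 0" by blast
  moreover have "K \<subseteq> I"
    using xI I by (auto simp: K_def right_ideal_def) (metis mult.assoc)
  ultimately show "J \<inter> I \<noteq> {0}" by blast
qed

end
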